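(* Let $n\ge3$ and let $b_1,\dots,b_n$ be positive integers. For $k=0,\dots,b_1+\dots+b_n-\max\{b_1,\dots,b_n\}$, $$A([\mathbf b],k)=\sum_{(i_2,\dots,i_{n-1})\in\Delta}A_{i_2}A_{i_2,i_3}A_{i_3,i_4}\cdots A_{i_{n-1},i_n},$$ where $i_n:=k$, $A_{i_2}=\binom{b_1}{i_2}\binom{b_2}{i_2}$, and for $s=2,\dots,n-1$, $$A_{i_s,i_{s+1}}=\binom{b_1+\dots+b_s-i_s}{i_{s+1}-i_s}\binom{b_{s+1}+i_s}{i_{s+1}}\ge0,$$ and $\Delta$ is the set of integer tuples $(i_2,\dots,i_{n-1})$ with $0\le i_s\le\min\{b_1+\dots+b_s-\max\{b_1,\dots,b_s\},\ i_{s+1}\}$ for $s=2,\dots,n-1$. In particular each $A([\mathbf b],k)$ is a sum of products of nonnegative integers.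
   Context: $A([\mathbf b],k)$ (Simon Newcomb number) is the number of words $u_1\cdots u_N$, $N=b_1+\dots+b_n$, over $\{1,\dots,n\}$ containing the letter $i$ exactly $b_i$ times, having exactly $k$ descents, where a descent is an index $m$ with $u_m>u_{m+1}$. Binomial coefficients $\binom{a}{m}$ are taken to be $0$ when $m<0$ or $m>a$. *)

theory Defs
  imports Main "HOL-Library.FuncSet"
begin

definition descents :: "nat list \<Rightarrow> nat set" where
  "descents w = {m. Suc m < length w \<and> w ! m > w ! Suc m}"

definition newcomb :: "nat \<Rightarrow> (nat \<Rightarrow> nat) \<Rightarrow> nat \<Rightarrow> nat" where
  "newcomb n b k = card {w :: nat list.
      length w = (\<Sum>j=1..n. b j) \<and> set w \<subseteq> {1..n} \<and>
      (\<forall>i\<in>{1..n}. count_list w i = b i) \<and> card (descents w) = k}"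

definition psum :: "(nat \<Rightarrow> nat) \<Rightarrow> nat \<Rightarrow> nat" where
  "psum b s = (\<Sum>j=1..s. b j)"

definition pmax :: "(nat \<Rightarrow> nat) \<Rightarrow> nat \<Rightarrow> nat" where
  "pmax b s = Max (b ` {1..s})"

text \<open>Delta: tuples (i_2,...,i_{n-1}), represented as extensional functions on {2..n-1},
  with i_n := k.\<close>
definition newcomb_delta :: "nat \<Rightarrow> (nat \<Rightarrow> nat) \<Rightarrow> nat \<Rightarrow> (nat \<Rightarrow> nat) set" where
  "newcomb_delta n b k = {i \<in> {2..n-1} \<rightarrow>\<^sub>E (UNIV :: nat set).
      \<forall>s\<in>{2..n-1}. i s \<le> min (psum b s - pmax b s) ((i(n := k)) (Suc s))}"

definition newcomb_term :: "nat \<Rightarrow> (nat \<Rightarrow> nat) \<Rightarrow> nat \<Rightarrow> (nat \<Rightarrow> nat) \<Rightarrow> nat" where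
  "newcomb_term n b k i =
     (let I = i(n := k) in
      (b 1 choose I 2) * (b 2 choose I 2) *
      (\<Prod>s\<in>{2..n-1}. ((psum b s - I s) choose (I (Suc s) - I s)) *
                      ((b (Suc s) + I s) choose I (Suc s))))"

end

theory Submission
  imports Defs
begin

text \<open>Every word over \<open>{1..s+1}\<close> arises in exactly one way by inserting blocks of the largest
  letter \<open>s+1\<close> into the \<open>length u + 1\<close> gaps of a word \<open>u\<close> over \<open>{1..s}\<close>, the block lengths
  forming a weak composition of \<open>b (s+1)\<close>. A nonempty block creates a new descent exactly when it
  sits at the front or after a weak ascent of \<open>u\<close>; if \<open>u\<close> has \<open>d\<close> descents there are
  \<open>length u - d\<close> such gaps, and the compositions producing \<open>j\<close> descents number
  \<open>(psum b s - d choose j - d) * (b (s+1) + d choose j)\<close>. This gives a recurrence for \<open>newcomb\<close>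
  in \<open>s\<close>, and the sum over \<open>\<Delta>\<close> satisfies the same recurrence by splitting off its last
  coordinate \<open>i s = d\<close>; both start from \<open>(b 1 choose k) * (b 2 choose k)\<close> at \<open>n = 2\<close>.\<close>

fun descent_count :: "nat list \<Rightarrow> nat" where
  "descent_count (x # y # w) = (if y < x then 1 else 0) + descent_count (y # w)"
| "descent_count _ = 0"

lemma card_descents: "card (descents w) = descent_count w"
proof (induction w rule: descent_count.induct)
  case (1 x y w)
  have "descents (x # y # w) = (if y < x then insert 0 else id) (Suc ` descents (y # w))"
  proof (intro set_eqI)
    fix m
    show "m \<in> descents (x # y # w) \<longleftrightarrow> m \<in> (if y < x then insert 0 else id) (Suc ` descents (y # w))"
      by (cases m) (auto simp: descents_def)
  qed
  moreover have "finite (descents (y # w))"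
    unfolding descents_def by (rule finite_subset[of _ "{..<length (y # w)}"]) auto
  ultimately show ?case using 1 by (simp add: card_image)
qed (simp_all add: descents_def)

lemma descent_count_Cons_replicate: "x \<le> L \<Longrightarrow> descent_count (x # replicate c L) = 0"
  by (induction c arbitrary: x) auto

lemma descent_count_replicate: "descent_count (replicate c L) = 0"
  by (cases c) (auto simp: descent_count_Cons_replicate)

lemma descent_count_replicate_append:
  "y < L \<Longrightarrow> descent_count (replicate (Suc c) L @ y # w) = Suc (descent_count (y # w))"
  by (induction c) auto

lemma descent_count_add_count_list_le: "descent_count w + count_list w i \<le> length w"
proof -
  have "descent_count w + count_list w i + (if w \<noteq> [] \<and> hd w < i then 1 else 0) \<le> length w"
    by (induction w rule: descent_count.induct) auto
  then show ?thesis by linarith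
qed

fun insert_blocks :: "nat \<Rightarrow> nat list \<Rightarrow> nat list \<Rightarrow> nat list" where
  "insert_blocks L [] cs = replicate (sum_list cs) L"
| "insert_blocks L (x # u) [] = x # u"
| "insert_blocks L (x # u) (c # cs) = replicate c L @ x # insert_blocks L u cs"

fun block_lengths :: "nat \<Rightarrow> nat list \<Rightarrow> nat list" where
  "block_lengths L [] = [0]"
| "block_lengths L (x # w) =
     (if x = L then (hd (block_lengths L w) + 1) # tl (block_lengths L w) else 0 # block_lengths L w)"

lemma block_lengths_Cons_other: "x \<noteq> L \<Longrightarrow> block_lengths L (replicate c L @ x # w) = c # block_lengths L w"
  by (induction c) auto

lemma block_lengths_replicate: "block_lengths L (replicate c L) = [c]"
  by (induction c) auto

lemma block_lengths_neq_Nil: "block_lengths L w \<noteq> []"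
  by (induction w) auto

lemma length_block_lengths: "length (block_lengths L w) = Suc (length (filter (\<lambda>x. x \<noteq> L) w))"
  by (induction w) (auto simp: block_lengths_neq_Nil)

lemma sum_list_block_lengths: "sum_list (block_lengths L w) = count_list w L"
proof (induction w)
  case (Cons x w)
  then show ?case using block_lengths_neq_Nil[of L w] by (cases "block_lengths L w") auto
qed simp

lemma insert_blocks_block_lengths: "insert_blocks L (filter (\<lambda>x. x \<noteq> L) w) (block_lengths L w) = w"
proof (induction w)
  case (Cons x w)
  obtain c cs where "block_lengths L w = c # cs"
    using block_lengths_neq_Nil by (cases "block_lengths L w") auto
  with Cons show ?case by (cases "filter (\<lambda>x. x \<noteq> L) w") auto
qed simp

lemma block_lengths_insert_blocks:
  "L \<notin> set u \<Longrightarrow> length cs = Suc (length u) \<Longrightarrow> block_lengths L (insert_blocks L u cs) = cs"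
  by (induction L u cs rule: insert_blocks.induct) (auto simp: length_Suc_conv block_lengths_replicate block_lengths_Cons_other)

lemma filter_insert_blocks:
  "L \<notin> set u \<Longrightarrow> length cs = Suc (length u) \<Longrightarrow> filter (\<lambda>x. x \<noteq> L) (insert_blocks L u cs) = u"
  by (induction L u cs rule: insert_blocks.induct) (auto simp: length_Suc_conv)

lemma length_insert_blocks:
  "length cs = Suc (length u) \<Longrightarrow> length (insert_blocks L u cs) = length u + sum_list cs"
  by (induction L u cs rule: insert_blocks.induct) (auto simp: length_Suc_conv)

lemma set_insert_blocks:
  "length cs = Suc (length u) \<Longrightarrow> set (insert_blocks L u cs) \<subseteq> insert L (set u)"
  by (induction L u cs rule: insert_blocks.induct) (auto simp: length_Suc_conv)

lemma count_list_replicate: "count_list (replicate c L) i = (if i = L then c else 0)"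
  by (induction c) auto

lemma count_list_filter: "count_list (filter P xs) i = (if P i then count_list xs i else 0)"
  by (induction xs) auto

lemma count_list_insert_blocks:
  "L \<notin> set u \<Longrightarrow> length cs = Suc (length u) \<Longrightarrow>
   count_list (insert_blocks L u cs) i = (if i = L then sum_list cs else count_list u i)"
  by (induction L u cs rule: insert_blocks.induct) (auto simp: length_Suc_conv count_list_replicate)

text \<open>Entry \<open>m\<close> of \<open>new_descent_slots x u\<close> tells whether a nonempty block of a letter larger
  than \<open>x\<close> and all letters of \<open>u\<close>, inserted in \<open>x # u\<close> right before \<open>u ! m\<close> (at the end if
  \<open>m = length u\<close>), creates a new descent: it does after a weak ascent, and not at the end or
  inside a descent, which it merely displaces. The case \<open>x = 0\<close> describes insertion into \<open>u\<close>.\<close>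

fun new_descent_slots :: "nat \<Rightarrow> nat list \<Rightarrow> bool list" where
  "new_descent_slots x [] = [False]"
| "new_descent_slots x (y # u) = (x \<le> y) # new_descent_slots y u"

fun flagged_nonzero :: "bool list \<Rightarrow> nat list \<Rightarrow> nat" where
  "flagged_nonzero (p # ps) (c # cs) = (if p \<and> 0 < c then 1 else 0) + flagged_nonzero ps cs"
| "flagged_nonzero _ _ = 0"

lemma descent_count_Cons_0: "descent_count (0 # w) = descent_count w"
  by (cases w) auto

lemma descent_count_Cons_insert_blocks:
  assumes "\<forall>z\<in>set u. z < L" and "x < L" and "length cs = Suc (length u)"
  shows "descent_count (x # insert_blocks L u cs) =
    descent_count (x # u) + flagged_nonzero (new_descent_slots x u) cs"
  using assms
proof (induction u arbitrary: x cs)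
  case Nil
  then show ?case by (auto simp: length_Suc_conv descent_count_Cons_replicate)
next
  case (Cons y u)
  then obtain c cs' where cs: "cs = c # cs'" by (cases cs) auto
  have IH: "descent_count (y # insert_blocks L u cs') =
      descent_count (y # u) + flagged_nonzero (new_descent_slots y u) cs'"
    using Cons cs by auto
  show ?case
  proof (cases c)
    case 0
    with IH cs show ?thesis by simp
  next
    case (Suc c')
    have "descent_count (x # insert_blocks L (y # u) cs) = Suc (descent_count (y # insert_blocks L u cs'))"
      using cs Suc Cons.prems descent_count_replicate_append[of y L c'] by simp
    with IH cs Suc show ?thesis by simp
  qed
qed

lemma new_descent_slots_eq_snoc:
  "\<exists>Q. new_descent_slots x u = Q @ [False] \<and> length Q = length u \<and>
     count_list Q False = descent_count (x # u)"
proof (induction u arbitrary: x)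
  case (Cons y u)
  then obtain Q where "new_descent_slots y u = Q @ [False]" "length Q = length u"
    "count_list Q False = descent_count (y # u)" by blast
  then show ?case by (intro exI[of _ "(x \<le> y) # Q"]) auto
qed simp

definition weak_compositions :: "nat \<Rightarrow> nat \<Rightarrow> nat list set" where
  "weak_compositions l m = {cs. length cs = l \<and> sum_list cs = m}"

lemma finite_weak_compositions: "finite (weak_compositions l m)"
proof (rule finite_subset)
  show "weak_compositions l m \<subseteq> {cs. set cs \<subseteq> {0..m} \<and> length cs = l}"
    unfolding weak_compositions_def using member_le_sum_list by fastforce
qed (simp add: finite_lists_length_eq)

lemma card_weak_compositions_Suc:
  "card {cs \<in> weak_compositions (Suc l) m. P cs} =
   (\<Sum>x\<le>m. card {cs \<in> weak_compositions l (m - x). P (x # cs)})"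
proof -
  have "{cs \<in> weak_compositions (Suc l) m. P cs} =
      (\<Union>x\<le>m. (#) x ` {cs \<in> weak_compositions l (m - x). P (x # cs)})"
    by (auto simp: weak_compositions_def length_Suc_conv image_iff)
  also have "card \<dots> = (\<Sum>x\<le>m. card {cs \<in> weak_compositions l (m - x). P (x # cs)})"
    by (subst card_UN_disjoint) (auto simp: finite_weak_compositions card_image)
  finally show ?thesis .
qed

lemma sum_choose_shifted:
  "F \<le> N \<Longrightarrow> (\<Sum>x<m. (x + F) choose N) = (m + F) choose Suc N"
  by (induction m) (simp_all add: binomial_eq_0)

lemma card_flagged_nonzero:
  "card {cs \<in> weak_compositions (Suc (length Q)) m. flagged_nonzero (Q @ [False]) cs = t} =
   (count_list Q True choose t) * ((m + count_list Q False) choose (t + count_list Q False))"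
proof (induction Q arbitrary: m t)
  case Nil
  have "{cs \<in> weak_compositions (Suc 0) m. flagged_nonzero [False] cs = t} = (if t = 0 then {[m]} else {})"
    by (auto simp: weak_compositions_def length_Suc_conv)
  then show ?case by simp
next
  case (Cons p Q)
  define a where "a = count_list Q True"
  define F where "F = count_list Q False"
  define G where "G m' t' = card {cs \<in> weak_compositions (Suc (length Q)) m'.
    flagged_nonzero (Q @ [False]) cs = t'}" for m' t'
  have IH: "G m' t' = (a choose t') * ((m' + F) choose (t' + F))" for m' t'
    using Cons.IH unfolding G_def a_def F_def .
  have "card {cs \<in> weak_compositions (Suc (length (p # Q))) m. flagged_nonzero ((p # Q) @ [False]) cs = t}
      = (\<Sum>x<Suc m. card {cs \<in> weak_compositions (Suc (length Q)) (m - x).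
          (if p \<and> 0 < x then 1 else 0) + flagged_nonzero (Q @ [False]) cs = t})"
    unfolding lessThan_Suc_atMost by (simp add: card_weak_compositions_Suc)
  also have "\<dots> = G m t + (\<Sum>x<m. card {cs \<in> weak_compositions (Suc (length Q)) (m - Suc x).
          (if p then 1 else 0) + flagged_nonzero (Q @ [False]) cs = t})"
    unfolding sum.lessThan_Suc_shift G_def by simp
  also have "\<dots> = G m t + (\<Sum>x<m. card {cs \<in> weak_compositions (Suc (length Q)) x.
          (if p then 1 else 0) + flagged_nonzero (Q @ [False]) cs = t})"
    by (subst sum.nat_diff_reindex) (rule refl)
  also have "\<dots> = (count_list (p # Q) True choose t) *
      ((m + count_list (p # Q) False) choose (t + count_list (p # Q) False))"
  proof (cases p)
    case False
    then have "G m t + (\<Sum>x<m. G x t) = (a choose t) * (((m + F) choose (t + F)) + ((m + F) choose Suc (t + F)))"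
      by (simp add: IH sum_choose_shifted flip: sum_distrib_left distrib_left)
    with False show ?thesis by (simp add: G_def a_def F_def)
  next
    case True
    show ?thesis
    proof (cases t)
      case 0
      with True show ?thesis by (simp add: IH a_def F_def)
    next
      case (Suc t')
      with True have "G m t + (\<Sum>x<m. G x t') = ((a choose t) + (a choose t')) * ((m + F) choose (t + F))"
        by (simp add: IH sum_choose_shifted distrib_right flip: sum_distrib_left)
      with True Suc show ?thesis by (simp add: G_def a_def F_def)
    qed
  qed
  finally show ?case .
qed

lemma card_descent_count_insert_blocks:
  "card {cs \<in> weak_compositions (Suc (length u)) m. descent_count (x # u) + flagged_nonzero (new_descent_slots x u) cs = j}
   = (if descent_count (x # u) \<le> j
      then ((length u - descent_count (x # u)) choose (j - descent_count (x # u))) * ((m + descent_count (x # u)) choose j)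
      else 0)"
proof -
  obtain Q where Q: "new_descent_slots x u = Q @ [False]" "length Q = length u"
    "count_list Q False = descent_count (x # u)"
    using new_descent_slots_eq_snoc by blast
  show ?thesis
  proof (cases "descent_count (x # u) \<le> j")
    case True
    have "count_list Q True + count_list Q False = length Q"
      by (induction Q) auto
    with Q have "count_list Q True = length u - descent_count (x # u)"
      by simp
    moreover have "{cs \<in> weak_compositions (Suc (length u)) m.
        descent_count (x # u) + flagged_nonzero (new_descent_slots x u) cs = j} =
      {cs \<in> weak_compositions (Suc (length Q)) m. flagged_nonzero (Q @ [False]) cs = j - descent_count (x # u)}"
      using Q True by auto
    ultimately show ?thesis
      using Q True card_flagged_nonzero[of Q m "j - descent_count (x # u)"] by simp
  qed auto
qed

definition newcomb_words :: "(nat \<Rightarrow> nat) \<Rightarrow> nat \<Rightarrow> nat list set" where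
  "newcomb_words b s = {w. length w = psum b s \<and> set w \<subseteq> {1..s} \<and> (\<forall>i\<in>{1..s}. count_list w i = b i)}"

lemma newcomb_eq_card_newcomb_words: "newcomb s b d = card {w \<in> newcomb_words b s. descent_count w = d}"
  unfolding newcomb_def newcomb_words_def psum_def by (simp add: card_descents conj_assoc)

lemma finite_newcomb_words: "finite (newcomb_words b s)"
proof (rule finite_subset)
  show "newcomb_words b s \<subseteq> {w. set w \<subseteq> {1..s} \<and> length w = psum b s}"
    unfolding newcomb_words_def by auto
qed (simp add: finite_lists_length_eq)

lemma descent_count_le_newcomb_words:
  assumes "s \<ge> 1" and "w \<in> newcomb_words b s"
  shows "descent_count w \<le> psum b s - pmax b s"
proof -
  have "pmax b s \<in> b ` {1..s}"
    unfolding pmax_def using assms(1) by (intro Max_in) auto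
  then obtain i where "i \<in> {1..s}" "pmax b s = b i" by auto
  with assms(2) descent_count_add_count_list_le[of w i] show ?thesis
    unfolding newcomb_words_def by auto
qed

lemma psum_Suc: "psum b (Suc s) = psum b s + b (Suc s)"
  unfolding psum_def by simp

lemma bij_betw_insert_blocks_newcomb_words:
  "bij_betw (\<lambda>(u, cs). insert_blocks (Suc s) u cs)
     (SIGMA u:newcomb_words b s. weak_compositions (Suc (length u)) (b (Suc s)))
     (newcomb_words b (Suc s))"
proof -
  let ?split = "\<lambda>w. (filter (\<lambda>x. x \<noteq> Suc s) w, block_lengths (Suc s) w)"
  have Suc_notin: "Suc s \<notin> set u" if "u \<in> newcomb_words b s" for u
    using that unfolding newcomb_words_def by auto
  have split_insert: "?split (insert_blocks (Suc s) u cs) = (u, cs)"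
    if "u \<in> newcomb_words b s" and "cs \<in> weak_compositions (Suc (length u)) (b (Suc s))" for u cs
    using that Suc_notin unfolding weak_compositions_def
    by (simp add: filter_insert_blocks block_lengths_insert_blocks)
  have insert_mem: "insert_blocks (Suc s) u cs \<in> newcomb_words b (Suc s)"
    if u: "u \<in> newcomb_words b s" and cs: "cs \<in> weak_compositions (Suc (length u)) (b (Suc s))" for u cs
  proof -
    have len: "length cs = Suc (length u)"
      using cs unfolding weak_compositions_def by simp
    have "set (insert_blocks (Suc s) u cs) \<subseteq> insert (Suc s) {1..s}"
      using set_insert_blocks[OF len, of "Suc s"] u unfolding newcomb_words_def by auto
    then show ?thesis
      using u cs count_list_insert_blocks[OF Suc_notin[OF u] len]
      unfolding newcomb_words_def weak_compositions_def
      by (auto simp: length_insert_blocks[OF len] psum_Suc atLeastAtMostSuc_conv)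
  qed
  have split_mem: "filter (\<lambda>x. x \<noteq> Suc s) w \<in> newcomb_words b s"
    "block_lengths (Suc s) w \<in> weak_compositions (Suc (length (filter (\<lambda>x. x \<noteq> Suc s) w))) (b (Suc s))"
    if w: "w \<in> newcomb_words b (Suc s)" for w
  proof -
    define u where "u = filter (\<lambda>x. x \<noteq> Suc s) w"
    have "set u \<subseteq> {1..s}" and count_u: "\<forall>i\<in>{1..s}. count_list u i = b i"
      using w unfolding u_def newcomb_words_def by (auto simp: count_list_filter)
    then show "filter (\<lambda>x. x \<noteq> Suc s) w \<in> newcomb_words b s"
      using sum_count_set[of u "{1..s}"] sum.cong[OF refl, of "{1..s}" "count_list u" b]
      unfolding u_def newcomb_words_def psum_def by simp
    show "block_lengths (Suc s) w \<in> weak_compositions (Suc (length u)) (b (Suc s))"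
      using w unfolding u_def newcomb_words_def weak_compositions_def
      by (simp add: length_block_lengths sum_list_block_lengths)
  qed
  show ?thesis
    by (rule bij_betw_byWitness[where f' = ?split])
      (auto simp: split_insert insert_mem split_mem insert_blocks_block_lengths)
qed

lemma newcomb_Suc:
  assumes "s \<ge> 1"
  shows "newcomb (Suc s) b j = (\<Sum>d\<in>{0..min (psum b s - pmax b s) j}.
    newcomb s b d * ((psum b s - d) choose (j - d)) * ((b (Suc s) + d) choose j))"
proof -
  let ?ins = "\<lambda>(u, cs). insert_blocks (Suc s) u cs"
  let ?C = "\<lambda>u. {cs \<in> weak_compositions (Suc (length u)) (b (Suc s)).
    descent_count (0 # u) + flagged_nonzero (new_descent_slots 0 u) cs = j}"
  define g where "g d = (if d \<le> j then ((psum b s - d) choose (j - d)) * ((b (Suc s) + d) choose j) else 0)" for d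
  have bij: "bij_betw ?ins (SIGMA u:newcomb_words b s. weak_compositions (Suc (length u)) (b (Suc s)))
      (newcomb_words b (Suc s))"
    by (rule bij_betw_insert_blocks_newcomb_words)
  have "descent_count (insert_blocks (Suc s) u cs) =
      descent_count (0 # u) + flagged_nonzero (new_descent_slots 0 u) cs"
    if "u \<in> newcomb_words b s" and "cs \<in> weak_compositions (Suc (length u)) (b (Suc s))" for u cs
    using that descent_count_Cons_insert_blocks[of u "Suc s" 0 cs]
    unfolding newcomb_words_def weak_compositions_def by (auto simp: descent_count_Cons_0 subset_iff less_Suc_eq_le)
  then have "{w \<in> newcomb_words b (Suc s). descent_count w = j} = ?ins ` (SIGMA u:newcomb_words b s. ?C u)"
    using bij_betw_imp_surj_on[OF bij] by force
  moreover have "inj_on ?ins (SIGMA u:newcomb_words b s. ?C u)"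
    using bij_betw_imp_inj_on[OF bij] by (rule inj_on_subset) auto
  moreover have "card (?C u) = g (descent_count u)" if "u \<in> newcomb_words b s" for u
    using that card_descent_count_insert_blocks[of u "b (Suc s)" 0 j]
    unfolding newcomb_words_def g_def by (simp add: descent_count_Cons_0)
  ultimately have "newcomb (Suc s) b j = (\<Sum>u\<in>newcomb_words b s. g (descent_count u))"
    by (simp add: newcomb_eq_card_newcomb_words card_image finite_newcomb_words finite_weak_compositions)
  also have "\<dots> = (\<Sum>d\<in>{0..psum b s - pmax b s}. \<Sum>u\<in>{u \<in> newcomb_words b s. descent_count u = d}. g (descent_count u))"
    by (rule sum.group[symmetric]) (auto simp: finite_newcomb_words descent_count_le_newcomb_words[OF assms])
  also have "\<dots> = (\<Sum>d\<in>{0..psum b s - pmax b s}. newcomb s b d * g d)"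
    by (rule sum.cong) (auto simp: newcomb_eq_card_newcomb_words)
  also have "\<dots> = (\<Sum>d\<in>{0..min (psum b s - pmax b s) j}.
      newcomb s b d * ((psum b s - d) choose (j - d)) * ((b (Suc s) + d) choose j))"
    by (rule sum.mono_neutral_cong_right) (auto simp: g_def)
  finally show ?thesis .
qed

lemma newcomb_words_one: "newcomb_words b 1 = {replicate (b 1) 1}"
proof
  show "newcomb_words b 1 \<subseteq> {replicate (b 1) 1}"
    unfolding newcomb_words_def psum_def by (auto intro: replicate_eqI)
qed (auto simp: newcomb_words_def psum_def count_list_replicate)

lemma newcomb_one: "newcomb 1 b d = (if d = 0 then 1 else 0)"
proof -
  have "{w \<in> {replicate (b 1) 1}. descent_count w = d} = (if d = 0 then {replicate (b 1) 1} else {})"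
    by (auto simp: descent_count_replicate)
  then show ?thesis
    unfolding newcomb_eq_card_newcomb_words newcomb_words_one by simp
qed

lemma newcomb_two: "newcomb 2 b k = (b 1 choose k) * (b 2 choose k)"
  using newcomb_Suc[of 1 b k] newcomb_one[of b 0] by (simp add: psum_def pmax_def numeral_2_eq_2)

definition newcomb_sum :: "nat \<Rightarrow> (nat \<Rightarrow> nat) \<Rightarrow> nat \<Rightarrow> nat" where
  "newcomb_sum n b k = (\<Sum>i\<in>newcomb_delta n b k. newcomb_term n b k i)"

lemma finite_newcomb_delta: "finite (newcomb_delta n b k)"
proof (rule finite_subset)
  show "newcomb_delta n b k \<subseteq> PiE {2..n-1} (\<lambda>s. {0..psum b s})"
    unfolding newcomb_delta_def by (force simp: PiE_iff)
qed (simp add: finite_PiE)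

lemma newcomb_sum_two: "newcomb_sum 2 b k = (b 1 choose k) * (b 2 choose k)"
proof -
  have "newcomb_delta 2 b k = {\<lambda>_. undefined}"
    unfolding newcomb_delta_def by auto
  then show ?thesis
    unfolding newcomb_sum_def newcomb_term_def by simp
qed

lemma mem_newcomb_delta_Suc:
  assumes "n \<ge> 2"
  shows "i \<in> newcomb_delta (Suc n) b k \<longleftrightarrow>
    i n \<le> min (psum b n - pmax b n) k \<and> i(n := undefined) \<in> newcomb_delta n b (i n)"
proof -
  have "{2..Suc n - 1} = insert n {2..n - 1}" and "n \<notin> {2..n - 1}"
    using assms by auto
  then show ?thesis
    unfolding newcomb_delta_def by (auto simp: PiE_iff extensional_def)
qed

lemma newcomb_term_fun_upd:
  assumes "n \<ge> 2"
  shows "newcomb_term (Suc n) b k (i(n := d)) =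
    newcomb_term n b d i * ((psum b n - d) choose (k - d)) * ((b (Suc n) + d) choose k)"
proof -
  define f where "f I s = ((psum b s - I s) choose (I (Suc s) - I s)) * ((b (Suc s) + I s) choose I (Suc s))"
    for I :: "nat \<Rightarrow> nat" and s
  have unfold_term: "newcomb_term m b k' j = (b 1 choose (j(m := k')) 2) * (b 2 choose (j(m := k')) 2) *
      (\<Prod>s\<in>{2..m - 1}. f (j(m := k')) s)" for m k' j
    unfolding newcomb_term_def f_def Let_def ..
  have "{2..Suc n - 1} = insert n {2..n - 1}" and "n \<notin> {2..n - 1}" and "2 \<noteq> Suc n"
    using assms by auto
  moreover have "(\<Prod>s\<in>{2..n - 1}. f (i(n := d, Suc n := k)) s) = (\<Prod>s\<in>{2..n - 1}. f (i(n := d)) s)"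
    by (rule prod.cong) (auto simp: f_def)
  moreover have "f (i(n := d, Suc n := k)) n = ((psum b n - d) choose (k - d)) * ((b (Suc n) + d) choose k)"
    unfolding f_def by simp
  ultimately show ?thesis
    unfolding unfold_term by (simp add: algebra_simps)
qed

lemma newcomb_sum_Suc:
  assumes "n \<ge> 2"
  shows "newcomb_sum (Suc n) b k = (\<Sum>d\<in>{0..min (psum b n - pmax b n) k}.
    newcomb_sum n b d * ((psum b n - d) choose (k - d)) * ((b (Suc n) + d) choose k))"
proof -
  let ?D = "{0..min (psum b n - pmax b n) k}"
  have undefined_at_n: "i n = undefined" if "i \<in> newcomb_delta n b d" for i d
    using that assms unfolding newcomb_delta_def by (auto simp: PiE_iff extensional_def)
  have "newcomb_sum (Suc n) b k = (\<Sum>(d, i)\<in>Sigma ?D (newcomb_delta n b). newcomb_term (Suc n) b k (i(n := d)))"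
    unfolding newcomb_sum_def
    by (rule sum.reindex_bij_witness[where j = "\<lambda>i. (i n, i(n := undefined))" and i = "\<lambda>(d, i). i(n := d)"])
      (auto simp: mem_newcomb_delta_Suc[OF assms] undefined_at_n fun_upd_idem)
  also have "\<dots> = (\<Sum>d\<in>?D. \<Sum>i\<in>newcomb_delta n b d.
      newcomb_term n b d i * (((psum b n - d) choose (k - d)) * ((b (Suc n) + d) choose k)))"
    by (simp add: sum.Sigma finite_newcomb_delta newcomb_term_fun_upd[OF assms] mult.assoc)
  finally show ?thesis
    unfolding newcomb_sum_def by (simp add: sum_distrib_right mult.assoc)
qed

lemma newcomb_eq_newcomb_sum: "n \<ge> 2 \<Longrightarrow> newcomb n b k = newcomb_sum n b k"
proof (induction n arbitrary: k rule: nat_induct_at_least)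
  case base
  then show ?case by (simp add: newcomb_two newcomb_sum_two)
next
  case (Suc n)
  then show ?case by (simp add: newcomb_Suc newcomb_sum_Suc)
qed

theorem mainTheorem11:
  fixes n k :: nat and b :: "nat \<Rightarrow> nat"
  assumes "n \<ge> 3"
    and "\<forall>j\<in>{1..n}. b j > 0"
    and "k \<le> psum b n - pmax b n"
  shows "newcomb n b k = (\<Sum>i\<in>newcomb_delta n b k. newcomb_term n b k i)"
  using newcomb_eq_newcomb_sum[of n b k] assms(1) unfolding newcomb_sum_def by simp

end
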